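(* In the setting below, for every nonempty $A\subseteq[n]$: $\Pr_{\psi\sim\Psi}(E_1(\psi)\wedge\neg E_2(\psi))\le 2^{-6}$.
   Context: $[N]:=\{0,\dots,N-1\}$. Fix integers $n\ge1$ and real $0<\varepsilon<1$. Let $b:=2^{\lceil\log_2(9\cdot 2^{23}\varepsilon^{-2})\rceil}$ and $k:=\lceil\tfrac{15}{2}\ln b+16\rceil$. Hash families: for $d\ge1$, identify $[2^d]$ with $\mathrm{GF}(2^d)$ via binary representation. For $k'\ge1$, $N\le 2^d$, $c\le d$, $\mathcal H_{k'}([N],[2^c])$ is the uniform distribution over tuples $(a_0,\dots,a_{k'-1})\in\mathrm{GF}(2^d)^{k'}$, each giving $x\mapsto(\sum_ia_ix^i)\bmod 2^c$ on $[N]$; $\mathcal G_{k'}([N])$ is uniform over the same tuples giving $x\mapsto\mathrm{tz}(\sum_ia_ix^i)$, $\mathrm{tz}(y)$ = number of trailing zeros of the $d$-bit representation of $y$ ($\mathrm{tz}(0)=d$). Here $d$ is a fixed integer with $2^d\ge N$, $d\ge c$. $\Psi:=\mathcal G_2([n])\times\mathcal H_2([n],[2^5b^2])\times\mathcal H_k([2^5b^2],[b])$ with the uniform product distribution; $\psi=(f,g,h)$. For fixed nonempty $A\subseteq[n]$: $t(f):=\max_{a\in A}f(a)-\log_2b+9$; $s(f):=\max(0,t(f))$; $R(f):=\{a\in A: f(a)\ge s(f)\}$. Events: $E_1(\psi)$: $2^{-16}b\le 2^{-t(f)}|A|\le 2^{-1}b$; $E_2(\psi)$: $\big||R(f)|-2^{-s(f)}|A|\big|\le\frac{\varepsilon}{3}2^{-s(f)}|A|$.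 *)

theory Defs
  imports "HOL-Probability.Probability" "HOL-Library.Z2" "HOL-Computational_Algebra.Polynomial"
begin

text \<open>An element x of [2^d] is identified with the polynomial over GF(2) whose
  i-th coefficient is the i-th bit of x; GF(2^d) = GF(2)[X]/(P) for an irreducible
  polynomial P of degree d (the modulus P is a parameter, universally quantified).\<close>

definition gf_enc :: "nat \<Rightarrow> nat \<Rightarrow> bit poly" where
  "gf_enc d x = Poly (map (\<lambda>i. if Bit_Operations.bit x i then (1::bit) else 0) [0..<d])"

definition gf_dec :: "nat \<Rightarrow> bit poly \<Rightarrow> nat" where
  "gf_dec d p = (\<Sum>i<d. if coeff p i = 1 then 2 ^ i else 0)"

definition gf_eval :: "bit poly \<Rightarrow> nat \<Rightarrow> nat list \<Rightarrow> nat \<Rightarrow> nat" where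
  "gf_eval P d as x =
     gf_dec d ((\<Sum>i<length as. gf_enc d (as ! i) * gf_enc d x ^ i) mod P)"

definition tz :: "nat \<Rightarrow> nat \<Rightarrow> nat" where
  "tz d y = (if y = 0 then d else (LEAST i. Bit_Operations.bit y i))"

definition coeff_tuples :: "nat \<Rightarrow> nat \<Rightarrow> nat list pmf" where
  "coeff_tuples d k' = pmf_of_set {as. length as = k' \<and> set as \<subseteq> {..<2 ^ d}}"

text \<open>H_{k'}([N],[2^c]) (functions only relevant on [N]).\<close>
definition hash_H :: "bit poly \<Rightarrow> nat \<Rightarrow> nat \<Rightarrow> nat \<Rightarrow> (nat \<Rightarrow> nat) pmf" where
  "hash_H P d k' c = map_pmf (\<lambda>as x. gf_eval P d as x mod 2 ^ c) (coeff_tuples d k')"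

definition hash_G :: "bit poly \<Rightarrow> nat \<Rightarrow> nat \<Rightarrow> (nat \<Rightarrow> nat) pmf" where
  "hash_G P d k' = map_pmf (\<lambda>as x. tz d (gf_eval P d as x)) (coeff_tuples d k')"

definition log_b :: "real \<Rightarrow> nat" where
  "log_b \<epsilon> = nat \<lceil>log 2 (9 * 2 ^ 23 / \<epsilon>\<^sup>2)\<rceil>"

definition b_param :: "real \<Rightarrow> nat" where
  "b_param \<epsilon> = 2 ^ log_b \<epsilon>"

definition k_param :: "real \<Rightarrow> nat" where
  "k_param \<epsilon> = nat \<lceil>15 / 2 * ln (real (b_param \<epsilon>)) + 16\<rceil>"

definition t_of :: "real \<Rightarrow> nat set \<Rightarrow> (nat \<Rightarrow> nat) \<Rightarrow> int" where
  "t_of \<epsilon> A f = int (Max (f ` A)) - int (log_b \<epsilon>) + 9"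

definition s_of :: "real \<Rightarrow> nat set \<Rightarrow> (nat \<Rightarrow> nat) \<Rightarrow> int" where
  "s_of \<epsilon> A f = max 0 (t_of \<epsilon> A f)"

definition R_of :: "real \<Rightarrow> nat set \<Rightarrow> (nat \<Rightarrow> nat) \<Rightarrow> nat set" where
  "R_of \<epsilon> A f = {a \<in> A. int (f a) \<ge> s_of \<epsilon> A f}"

definition E1 :: "real \<Rightarrow> nat set \<Rightarrow> (nat \<Rightarrow> nat) \<times> (nat \<Rightarrow> nat) \<times> (nat \<Rightarrow> nat) \<Rightarrow> bool" where
  "E1 \<epsilon> A \<psi> = (let f = fst \<psi>; b = real (b_param \<epsilon>) in
     2 powi (-16) * b \<le> 2 powi (- t_of \<epsilon> A f) * real (card A)
     \<and> 2 powi (- t_of \<epsilon> A f) * real (card A) \<le> 2 powi (-1) * b)"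

definition E2 :: "real \<Rightarrow> nat set \<Rightarrow> (nat \<Rightarrow> nat) \<times> (nat \<Rightarrow> nat) \<times> (nat \<Rightarrow> nat) \<Rightarrow> bool" where
  "E2 \<epsilon> A \<psi> = (let f = fst \<psi> in
     \<bar>real (card (R_of \<epsilon> A f)) - 2 powi (- s_of \<epsilon> A f) * real (card A)\<bar>
       \<le> \<epsilon> / 3 * (2 powi (- s_of \<epsilon> A f) * real (card A)))"

end

theory Submission
  imports Defs "HOL-Computational_Algebra.Polynomial_Factorial"
begin

text \<open>Only the first hash function \<open>f\<close> enters \<open>E\<^sub>1\<close> and \<open>E\<^sub>2\<close>. It is
  \<open>f x = tz (a\<^sub>0 + a\<^sub>1 x)\<close> for a uniformly random affine map over \<open>GF(2^d)\<close>,
  whose values at two distinct points are independent and uniform; hence the events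
  \<open>s \<le> f x\<close>, each of probability \<open>2^-s\<close>, are pairwise independent. If \<open>E\<^sub>1\<close> holds
  and \<open>E\<^sub>2\<close> fails, then the level \<open>s = s(f)\<close> satisfies \<open>1 \<le> s\<close> and
  \<open>b 2^s \<le> 2^16 |A|\<close>, and the number of \<open>a \<in> A\<close> with \<open>s \<le> f a\<close> deviates from its
  mean \<open>|A| 2^-s\<close> by at least \<open>\<epsilon>/3\<close> times the mean. For a fixed level, Chebyshev's
  inequality bounds the probability of this by \<open>9 2^s / (\<epsilon>^2 |A|)\<close>; a union bound over
  all admissible levels gives \<open>9 2^17 / (\<epsilon>^2 b) \<le> 2^-6\<close>.\<close>

section \<open>Affine hashing over GF(2^d) is pairwise independent\<close>

lemma coeff_gf_enc: "coeff (gf_enc d x) i = (if i < d \<and> bit x i then 1 else 0)"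
  by (auto simp: gf_enc_def nth_default_def)

lemma degree_gf_enc_less: "0 < d \<Longrightarrow> degree (gf_enc d x) < d"
  using degree_le[of "d - 1" "gf_enc d x"] by (fastforce simp: coeff_gf_enc)

lemma gf_dec_eq_horner_sum: "gf_dec d p = horner_sum of_bool 2 (map (\<lambda>i. coeff p i = 1) [0..<d])"
  unfolding gf_dec_def horner_sum_eq_sum
  by (auto simp: atLeast0LessThan of_bool_def intro!: sum.cong)

lemma bit_gf_dec_iff: "bit (gf_dec d p) i \<longleftrightarrow> i < d \<and> coeff p i = 1"
  unfolding gf_dec_eq_horner_sum by (auto simp: bit_horner_sum_bit_iff)

lemma gf_dec_less: "gf_dec d p < 2 ^ d"
  unfolding gf_dec_eq_horner_sum
  using horner_sum_of_bool_2_less[of "map (\<lambda>i. coeff p i = 1) [0..<d]"] by simp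

lemma gf_dec_gf_enc:
  assumes "x < 2 ^ d"
  shows "gf_dec d (gf_enc d x) = x"
proof (rule bit_eqI)
  fix i
  have "bit x i \<longleftrightarrow> bit (take_bit d x) i"
    using assms by (metis take_bit_nat_eq_self_iff)
  then show "bit (gf_dec d (gf_enc d x)) i \<longleftrightarrow> bit x i"
    by (auto simp: bit_gf_dec_iff coeff_gf_enc bit_take_bit_iff)
qed

lemma inj_on_gf_enc: "inj_on (gf_enc d) {..<2 ^ d}"
  by (rule inj_on_inverseI[of _ "gf_dec d"]) (simp add: gf_dec_gf_enc)

lemma gf_dec_inj:
  assumes "degree p < d" "degree q < d" "gf_dec d p = gf_dec d q"
  shows "p = q"
proof (rule poly_eqI)
  fix i
  show "coeff p i = coeff q i"
  proof (cases "i < d")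
    case True
    then have "coeff p i = 1 \<longleftrightarrow> coeff q i = 1"
      using bit_gf_dec_iff[of d _ i] assms(3) by metis
    then show ?thesis
      by (cases "coeff p i"; cases "coeff q i") auto
  next
    case False
    then show ?thesis
      using assms(1,2) by (simp add: coeff_eq_0)
  qed
qed

lemma irreducible_imp_degree_pos:
  assumes "irreducible (P :: 'a :: field poly)"
  shows "0 < degree P"
  using assms is_unit_iff_degree[of P] unfolding irreducible_def by auto

lemma degree_mod_irreducible_less:
  "irreducible (P :: 'a :: field poly) \<Longrightarrow> degree (q mod P) < degree P"
proof -
  assume "irreducible P"
  then have "0 < degree P"
    by (rule irreducible_imp_degree_pos)
  then show ?thesis
    using degree_mod_less[of P q] by (cases "q mod P = 0"; cases "P = 0") auto
qed

lemma dvd_degree_less_imp_eq_0: "(P :: 'a :: field poly) dvd q \<Longrightarrow> degree q < degree P \<Longrightarrow> q = 0"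
  by (metis dvd_imp_degree_le leD)

lemma gf_eval_less: "gf_eval P d as x < 2 ^ d"
  unfolding gf_eval_def by (rule gf_dec_less)

lemma gf_eval_linear:
  "gf_eval P d [a0, a1] x = gf_dec d ((gf_enc d a0 + gf_enc d a1 * gf_enc d x) mod P)"
proof -
  have "(\<Sum>i<length [a0, a1]. gf_enc d ([a0, a1] ! i) * gf_enc d x ^ i)
      = gf_enc d a0 + gf_enc d a1 * gf_enc d x"
    by (simp add: numeral_2_eq_2)
  then show ?thesis
    by (simp add: gf_eval_def)
qed

lemma dvd_linear_two_roots_imp_zero:
  fixes P c0 c1 u v :: "'a :: field poly"
  assumes P: "prime_elem P"
    and deg: "degree c0 < degree P" "degree c1 < degree P" "degree (u - v) < degree P"
    and "u \<noteq> v" "P dvd c0 + c1 * u" "P dvd c0 + c1 * v"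
  shows "c0 = 0 \<and> c1 = 0"
proof -
  have "P dvd (c0 + c1 * u) - (c0 + c1 * v)"
    using assms(6,7) by (rule dvd_diff)
  also have "(c0 + c1 * u) - (c0 + c1 * v) = c1 * (u - v)"
    by (simp add: algebra_simps)
  finally have "P dvd c1 \<or> P dvd u - v"
    using P prime_elem_dvd_mult_iff by blast
  moreover have "u - v \<noteq> 0"
    using \<open>u \<noteq> v\<close> by simp
  ultimately have "c1 = 0"
    using deg(2,3) dvd_degree_less_imp_eq_0 by blast
  moreover have "c0 = 0"
    using assms(6) deg(1) dvd_degree_less_imp_eq_0 \<open>c1 = 0\<close> by simp
  ultimately show ?thesis
    by simp
qed

lemma gf_eval_linear_eq_imp_dvd:
  assumes "irreducible P" "degree P = d"
    and "gf_eval P d [a0, a1] x = gf_eval P d [b0, b1] x"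
  shows "P dvd (gf_enc d a0 - gf_enc d b0) + (gf_enc d a1 - gf_enc d b1) * gf_enc d x"
proof -
  let ?E = "gf_enc d"
  have "(?E a0 + ?E a1 * ?E x) mod P = (?E b0 + ?E b1 * ?E x) mod P"
    using assms by (intro gf_dec_inj) (auto simp: gf_eval_linear degree_mod_irreducible_less)
  then have "P dvd (?E a0 + ?E a1 * ?E x) - (?E b0 + ?E b1 * ?E x)"
    by (simp only: mod_eq_dvd_iff)
  then show ?thesis
    by (simp add: algebra_simps)
qed

lemma gf_eval_linear_inj:
  assumes P: "irreducible P" "degree P = d"
    and xz: "x < 2 ^ d" "z < 2 ^ d" "x \<noteq> z"
    and coeffs: "a0 < 2 ^ d" "a1 < 2 ^ d" "b0 < 2 ^ d" "b1 < 2 ^ d"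
    and "gf_eval P d [a0, a1] x = gf_eval P d [b0, b1] x"
    and "gf_eval P d [a0, a1] z = gf_eval P d [b0, b1] z"
  shows "a0 = b0 \<and> a1 = b1"
proof -
  let ?E = "gf_enc d"
  have "0 < d"
    using P irreducible_imp_degree_pos by blast
  then have deg_diff: "degree (?E u - ?E v) < degree P" for u v
    using degree_diff_le_max[of "?E u" "?E v"] degree_gf_enc_less[of d u]
      degree_gf_enc_less[of d v] P(2)
    by linarith
  have "?E x \<noteq> ?E z"
    using inj_on_gf_enc[of d] xz by (auto dest: inj_onD)
  moreover have "prime_elem P"
    using P(1) by (rule field_poly_irreducible_imp_prime)
  ultimately have "?E a0 - ?E b0 = 0 \<and> ?E a1 - ?E b1 = 0"
    using dvd_linear_two_roots_imp_zero deg_diff gf_eval_linear_eq_imp_dvd[OF P] assms(10,11)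
    by blast
  then show ?thesis
    using inj_on_gf_enc[of d] coeffs by (auto dest: inj_onD)
qed

definition gf_tuples :: "nat \<Rightarrow> nat \<Rightarrow> nat list set" where
  "gf_tuples d k = {as. length as = k \<and> set as \<subseteq> {..<2 ^ d}}"

lemma coeff_tuples_eq_pmf_of_set: "coeff_tuples d k = pmf_of_set (gf_tuples d k)"
  by (simp add: coeff_tuples_def gf_tuples_def)

lemma finite_gf_tuples: "finite (gf_tuples d k)"
  using finite_lists_length_eq[of "{..<2 ^ d :: nat}" k] by (simp add: gf_tuples_def conj_commute)

lemma card_gf_tuples: "card (gf_tuples d k) = (2 ^ d) ^ k"
  using card_lists_length_eq[of "{..<2 ^ d :: nat}" k] by (simp add: gf_tuples_def conj_commute)

lemma gf_tuples_two_iff: "as \<in> gf_tuples d 2 \<longleftrightarrow> (\<exists>a0 a1. as = [a0, a1] \<and> a0 < 2 ^ d \<and> a1 < 2 ^ d)"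
proof
  assume "as \<in> gf_tuples d 2"
  then have "length as = 2" "set as \<subseteq> {..<2 ^ d}"
    by (auto simp: gf_tuples_def)
  moreover from this(1) obtain a0 a1 where "as = [a0, a1]"
    by (metis length_0_conv length_Suc_conv numeral_2_eq_2)
  ultimately show "\<exists>a0 a1. as = [a0, a1] \<and> a0 < 2 ^ d \<and> a1 < 2 ^ d"
    by auto
qed (auto simp: gf_tuples_def)

lemma gf_eval_pair_bij:
  assumes P: "irreducible P" "degree P = d"
    and xz: "x < 2 ^ d" "z < 2 ^ d" "x \<noteq> z"
  shows "bij_betw (\<lambda>as. (gf_eval P d as x, gf_eval P d as z))
    (gf_tuples d 2) ({..<2 ^ d} \<times> {..<2 ^ d})"
    (is "bij_betw ?F _ _")
proof -
  have inj: "inj_on ?F (gf_tuples d 2)"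
  proof (rule inj_onI)
    fix as bs
    assume "as \<in> gf_tuples d 2" "bs \<in> gf_tuples d 2" "?F as = ?F bs"
    then obtain a0 a1 b0 b1 where "as = [a0, a1]" "bs = [b0, b1]"
      "a0 < 2 ^ d" "a1 < 2 ^ d" "b0 < 2 ^ d" "b1 < 2 ^ d"
      "gf_eval P d [a0, a1] x = gf_eval P d [b0, b1] x"
      "gf_eval P d [a0, a1] z = gf_eval P d [b0, b1] z"
      unfolding gf_tuples_two_iff by auto
    then show "as = bs"
      using gf_eval_linear_inj[OF P xz] by blast
  qed
  moreover have "?F ` gf_tuples d 2 \<subseteq> {..<2 ^ d} \<times> {..<2 ^ d}"
    using gf_eval_less by auto
  moreover have "card (?F ` gf_tuples d 2) = card ({..<2 ^ d :: nat} \<times> {..<2 ^ d :: nat})"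
    using card_image[OF inj] by (simp add: card_gf_tuples card_cartesian_product power2_eq_square)
  ultimately show ?thesis
    by (simp add: bij_betw_def card_subset_eq)
qed

lemma card_gf_eval_pair_in:
  assumes P: "irreducible P" "degree P = d"
    and xz: "x < 2 ^ d" "z < 2 ^ d" "x \<noteq> z"
    and XZ: "X \<subseteq> {..<2 ^ d}" "Z \<subseteq> {..<2 ^ d}"
  shows "card {as \<in> gf_tuples d 2. gf_eval P d as x \<in> X \<and> gf_eval P d as z \<in> Z} = card X * card Z"
proof -
  let ?F = "\<lambda>as. (gf_eval P d as x, gf_eval P d as z)"
  have "bij_betw ?F {as \<in> gf_tuples d 2. ?F as \<in> X \<times> Z} {w \<in> {..<2 ^ d} \<times> {..<2 ^ d}. w \<in> X \<times> Z}"
    using gf_eval_pair_bij[OF P xz] by (rule bij_betw_Collect) simp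
  moreover have "{w \<in> {..<2 ^ d} \<times> {..<2 ^ d}. w \<in> X \<times> Z} = X \<times> Z"
    using XZ by blast
  ultimately show ?thesis
    by (simp add: bij_betw_same_card card_cartesian_product)
qed

lemma bit_less_pow2_imp_less:
  assumes "(y :: nat) < 2 ^ d" "bit y i"
  shows "i < d"
proof -
  have "bit (take_bit d y) i"
    using assms by (metis take_bit_nat_eq_self_iff)
  then show ?thesis
    by (simp add: bit_take_bit_iff)
qed

lemma tz_le:
  assumes "y < 2 ^ d"
  shows "tz d y \<le> d"
proof (cases "y = 0")
  case False
  then obtain i where "bit y i"
    using bit_eq_iff[of y 0] by auto
  then have "(LEAST i. bit y i) < d"
    using bit_less_pow2_imp_less[OF assms] by (meson LeastI)
  then show ?thesis
    using False by (simp add: tz_def)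
qed (simp add: tz_def)

lemma le_tz_iff_dvd:
  assumes "y < 2 ^ d" "s \<le> d"
  shows "s \<le> tz d y \<longleftrightarrow> 2 ^ s dvd y"
proof (cases "y = 0")
  case False
  then obtain j where "bit y j"
    using bit_eq_iff[of y 0] by auto
  then have "s \<le> (LEAST i. bit y i) \<longleftrightarrow> (\<forall>i<s. \<not> bit y i)"
    by (metis LeastI not_less not_less_Least order.strict_trans2)
  also have "\<dots> \<longleftrightarrow> take_bit s y = 0"
    by (auto simp: bit_eq_iff bit_take_bit_iff)
  finally show ?thesis
    using False by (simp add: tz_def take_bit_eq_0_iff)
qed (use assms in \<open>simp add: tz_def\<close>)

lemma card_tz_level:
  assumes "s \<le> d"
  shows "card {y \<in> {..<2 ^ d}. s \<le> tz d y} = 2 ^ (d - s)"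
proof -
  have pow: "(2 :: nat) ^ d = 2 ^ (d - s) * 2 ^ s"
    using assms by (simp flip: power_add)
  have "{y \<in> {..<2 ^ d}. s \<le> tz d y} = {y \<in> {..<2 ^ d}. 2 ^ s dvd y}"
    using le_tz_iff_dvd[OF _ assms] by auto
  also have "\<dots> = (\<lambda>k. k * 2 ^ s) ` {..<2 ^ (d - s)}"
    using pow by (auto elim!: dvdE simp: mult.commute)
  finally show ?thesis
    by (simp add: card_image inj_on_def)
qed

lemma card_tz_level_pair:
  assumes P: "irreducible P" "degree P = d"
    and xz: "x < 2 ^ d" "z < 2 ^ d" "x \<noteq> z" and "s \<le> d"
  shows "card {as \<in> gf_tuples d 2. s \<le> tz d (gf_eval P d as x) \<and> s \<le> tz d (gf_eval P d as z)}
    = (1 / 2 ^ s)\<^sup>2 * card (gf_tuples d 2)"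
proof -
  let ?L = "{y \<in> {..<2 ^ d}. s \<le> tz d y}"
  have levels: "{as \<in> gf_tuples d 2. s \<le> tz d (gf_eval P d as x) \<and> s \<le> tz d (gf_eval P d as z)}
    = {as \<in> gf_tuples d 2. gf_eval P d as x \<in> ?L \<and> gf_eval P d as z \<in> ?L}"
    using gf_eval_less by auto
  have "card {as \<in> gf_tuples d 2. gf_eval P d as x \<in> ?L \<and> gf_eval P d as z \<in> ?L} = card ?L * card ?L"
    by (rule card_gf_eval_pair_in[OF P xz]) auto
  then have "card {as \<in> gf_tuples d 2. s \<le> tz d (gf_eval P d as x) \<and> s \<le> tz d (gf_eval P d as z)}
    = 2 ^ (d - s) * 2 ^ (d - s)"
    by (simp only: levels card_tz_level[OF \<open>s \<le> d\<close>])
  then show ?thesis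
    using \<open>s \<le> d\<close> by (simp add: card_gf_tuples power_diff[of "2 :: real"] power2_eq_square)
qed

lemma card_tz_level_single:
  assumes P: "irreducible P" "degree P = d"
    and "x < 2 ^ d" "s \<le> d"
  shows "card {as \<in> gf_tuples d 2. s \<le> tz d (gf_eval P d as x)} = 1 / 2 ^ s * card (gf_tuples d 2)"
proof -
  let ?L = "{y \<in> {..<2 ^ d}. s \<le> tz d y}"
  define z :: nat where "z = (if x = 0 then 1 else 0)"
  have "(1 :: nat) < 2 ^ d"
    using irreducible_imp_degree_pos[OF P(1)] P(2) by (intro one_less_power) auto
  then have z: "z < 2 ^ d" "x \<noteq> z"
    by (auto simp: z_def)
  have level: "{as \<in> gf_tuples d 2. s \<le> tz d (gf_eval P d as x)}
    = {as \<in> gf_tuples d 2. gf_eval P d as x \<in> ?L \<and> gf_eval P d as z \<in> {..<2 ^ d}}"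
    using gf_eval_less by auto
  have "card {as \<in> gf_tuples d 2. gf_eval P d as x \<in> ?L \<and> gf_eval P d as z \<in> {..<2 ^ d}}
    = card ?L * card {..<2 ^ d :: nat}"
    by (rule card_gf_eval_pair_in[OF P \<open>x < 2 ^ d\<close> z]) auto
  then have "card {as \<in> gf_tuples d 2. s \<le> tz d (gf_eval P d as x)} = 2 ^ (d - s) * 2 ^ d"
    by (simp only: level card_tz_level[OF \<open>s \<le> d\<close>] card_lessThan)
  then show ?thesis
    using \<open>s \<le> d\<close> by (simp add: card_gf_tuples power_diff[of "2 :: real"] power2_eq_square)
qed

lemma set_pmf_hash_G_le: "f \<in> set_pmf (hash_G P d k) \<Longrightarrow> f x \<le> d"
  by (auto simp: hash_G_def intro: tz_le gf_eval_less)

lemma measure_hash_G: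
  "measure_pmf.prob (hash_G P d k) X
    = card {as \<in> gf_tuples d k. (\<lambda>x. tz d (gf_eval P d as x)) \<in> X} / card (gf_tuples d k)"
proof -
  have "gf_tuples d k \<noteq> {}"
    using card_gf_tuples[of d k] by (metis card.empty power_not_zero zero_neq_numeral)
  then show ?thesis
    by (simp add: hash_G_def coeff_tuples_eq_pmf_of_set measure_pmf_of_set finite_gf_tuples
        vimage_def Int_def)
qed

section \<open>Chebyshev bound for pairwise independent indicators\<close>

lemma sum_centered_indicator_products:
  fixes P Q :: "'t \<Rightarrow> bool" and p :: real
  assumes "finite T"
  shows "(\<Sum>t\<in>T. (of_bool (P t) - p) * (of_bool (Q t) - p))
    = card {t \<in> T. P t \<and> Q t} - p * card {t \<in> T. P t} - p * card {t \<in> T. Q t} + p\<^sup>2 * card T"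
proof -
  have "(\<Sum>t\<in>T. (of_bool (P t) - p) * (of_bool (Q t) - p))
      = (\<Sum>t\<in>T. of_bool (P t \<and> Q t) - p * of_bool (P t) - p * of_bool (Q t) + p\<^sup>2)"
    by (intro sum.cong) (auto simp: algebra_simps power2_eq_square)
  then show ?thesis
    using assms by (simp add: sum.distrib sum_subtractf sum_distrib_left[symmetric] Int_def)
qed

lemma sum_sq_deviation_pairwise_le:
  fixes I :: "'a \<Rightarrow> 't \<Rightarrow> bool" and p :: real
  assumes fin: "finite T" "finite A"
    and single: "\<And>a. a \<in> A \<Longrightarrow> card {t \<in> T. I a t} = p * card T"
    and pair: "\<And>a b. a \<in> A \<Longrightarrow> b \<in> A \<Longrightarrow> a \<noteq> b \<Longrightarrow> card {t \<in> T. I a t \<and> I b t} = p\<^sup>2 * card T"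
  shows "(\<Sum>t\<in>T. (card {a \<in> A. I a t} - card A * p)\<^sup>2) \<le> card A * p * card T"
proof -
  define X where "X a t = (of_bool (I a t) :: real) - p" for a t
  define cov where "cov a b = (\<Sum>t\<in>T. X a t * X b t)" for a b
  have cov_offdiag: "cov a b = 0" if "a \<in> A" "b \<in> A" "a \<noteq> b" for a b
    using that fin(1)
    by (simp add: cov_def X_def sum_centered_indicator_products single pair power2_eq_square)
  have cov_row: "(\<Sum>b\<in>A. cov a b) = cov a a" if "a \<in> A" for a
  proof -
    have "(\<Sum>b\<in>A - {a}. cov a b) = 0"
      using that cov_offdiag by (intro sum.neutral) auto
    then show ?thesis
      using fin(2) that by (simp add: sum.remove)
  qed
  have cov_diag: "cov a a = p * card T - p\<^sup>2 * card T" if "a \<in> A" for a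
    using that fin(1)
    by (simp add: cov_def X_def sum_centered_indicator_products single power2_eq_square)
  have "(card {a \<in> A. I a t} - card A * p) = (\<Sum>a\<in>A. X a t)" for t
    using fin(2) by (simp add: X_def sum_subtractf Int_def)
  then have "(\<Sum>t\<in>T. (card {a \<in> A. I a t} - card A * p)\<^sup>2) = (\<Sum>t\<in>T. \<Sum>a\<in>A. \<Sum>b\<in>A. X a t * X b t)"
    by (simp add: power2_eq_square sum_product)
  also have "\<dots> = (\<Sum>a\<in>A. \<Sum>t\<in>T. \<Sum>b\<in>A. X a t * X b t)"
    by (rule sum.swap)
  also have "\<dots> = (\<Sum>a\<in>A. \<Sum>b\<in>A. cov a b)"
    unfolding cov_def by (intro sum.cong refl sum.swap)
  also have "\<dots> = (\<Sum>a\<in>A. cov a a)"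
    by (intro sum.cong refl cov_row)
  also have "\<dots> \<le> (\<Sum>a\<in>A. p * card T)"
    by (intro sum_mono) (simp add: cov_diag)
  finally show ?thesis
    by simp
qed

lemma card_deviation_pairwise_le:
  fixes I :: "'a \<Rightarrow> 't \<Rightarrow> bool" and p \<delta> :: real
  assumes fin: "finite T" "finite A"
    and single: "\<And>a. a \<in> A \<Longrightarrow> card {t \<in> T. I a t} = p * card T"
    and pair: "\<And>a b. a \<in> A \<Longrightarrow> b \<in> A \<Longrightarrow> a \<noteq> b \<Longrightarrow> card {t \<in> T. I a t \<and> I b t} = p\<^sup>2 * card T"
    and "0 < \<delta>"
  shows "card {t \<in> T. \<delta> \<le> \<bar>card {a \<in> A. I a t} - card A * p\<bar>} * \<delta>\<^sup>2 \<le> card A * p * card T"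
proof -
  define D where "D t = card {a \<in> A. I a t} - card A * p" for t
  let ?S = "{t \<in> T. \<delta> \<le> \<bar>D t\<bar>}"
  have "card ?S * \<delta>\<^sup>2 = (\<Sum>t\<in>?S. \<delta>\<^sup>2)"
    by simp
  also have "\<dots> \<le> (\<Sum>t\<in>?S. (D t)\<^sup>2)"
  proof (rule sum_mono)
    fix t
    assume "t \<in> ?S"
    then have "\<delta>\<^sup>2 \<le> \<bar>D t\<bar>\<^sup>2"
      using \<open>0 < \<delta>\<close> by (intro power_mono) auto
    then show "\<delta>\<^sup>2 \<le> (D t)\<^sup>2"
      by simp
  qed
  also have "\<dots> \<le> (\<Sum>t\<in>T. (D t)\<^sup>2)"
    using fin(1) by (intro sum_mono2) auto
  also have "\<dots> \<le> card A * p * card T"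
    unfolding D_def using fin single pair by (rule sum_sq_deviation_pairwise_le)
  finally show ?thesis
    unfolding D_def .
qed

section \<open>Reduction to a deviation at a fixed level\<close>

definition level_deviates :: "real \<Rightarrow> nat set \<Rightarrow> nat \<Rightarrow> (nat \<Rightarrow> nat) \<Rightarrow> bool" where
  "level_deviates \<epsilon> A s f \<longleftrightarrow>
     \<epsilon> / 3 * (card A / 2 ^ s) \<le> \<bar>card {a \<in> A. s \<le> f a} - card A / 2 ^ s\<bar>"

lemma E1_not_E2_imp_level_deviates:
  assumes A: "finite A" "A \<noteq> {}" and "0 \<le> \<epsilon>" "9 \<le> log_b \<epsilon>"
    and E1: "E1 \<epsilon> A \<psi>" and not_E2: "\<not> E2 \<epsilon> A \<psi>"
  shows "\<exists>s. 1 \<le> s \<and> s \<le> Max (fst \<psi> ` A) \<and> b_param \<epsilon> * 2 ^ s \<le> 2 ^ 16 * card A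
    \<and> level_deviates \<epsilon> A s (fst \<psi>)"
proof -
  define f where "f = fst \<psi>"
  define t where "t = t_of \<epsilon> A f"
  have "0 < t"
  proof (rule ccontr)
    assume "\<not> 0 < t"
    then have "s_of \<epsilon> A f = 0" "R_of \<epsilon> A f = A"
      by (auto simp: s_of_def R_of_def t_def)
    then show False
      using not_E2 \<open>0 \<le> \<epsilon>\<close> by (simp add: E2_def Let_def f_def)
  qed
  define s where "s = nat t"
  have t_eq: "t = int s" "s_of \<epsilon> A f = int s"
    using \<open>0 < t\<close> by (auto simp: s_def s_of_def t_def)
  have "s \<le> Max (f ` A)"
    using t_eq(1) \<open>9 \<le> log_b \<epsilon>\<close> by (simp add: t_def t_of_def)
  moreover have "b_param \<epsilon> * 2 ^ s \<le> 2 ^ 16 * card A"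
  proof -
    have "b_param \<epsilon> / 2 ^ 16 \<le> card A / 2 ^ s"
      using E1 t_eq(1) by (simp add: E1_def Let_def f_def t_def power_int_minus_divide)
    then have "real (b_param \<epsilon> * 2 ^ s) \<le> real (2 ^ 16 * card A)"
      by (simp add: field_simps)
    then show ?thesis
      by (simp only: of_nat_le_iff)
  qed
  moreover have "level_deviates \<epsilon> A s f"
    using not_E2 t_eq(2)
    by (simp add: E2_def Let_def f_def R_of_def level_deviates_def power_int_minus_divide)
  moreover have "1 \<le> s"
    using \<open>0 < t\<close> by (simp add: s_def)
  ultimately show ?thesis
    unfolding f_def by blast
qed

definition deviating_hashes :: "real \<Rightarrow> nat set \<Rightarrow> nat \<Rightarrow> (nat \<Rightarrow> nat) set" where
  "deviating_hashes \<epsilon> A d =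
     {f. \<exists>s. 1 \<le> s \<and> s \<le> d \<and> b_param \<epsilon> * 2 ^ s \<le> 2 ^ 16 * card A \<and> level_deviates \<epsilon> A s f}"

lemma prob_E1_not_E2_le:
  fixes \<epsilon> :: real
  assumes A: "finite A" "A \<noteq> {}" and "0 \<le> \<epsilon>" "9 \<le> log_b \<epsilon>"
  shows "measure_pmf.prob (pair_pmf (hash_G P d k) Q) {\<psi>. E1 \<epsilon> A \<psi> \<and> \<not> E2 \<epsilon> A \<psi>}
    \<le> measure_pmf.prob (hash_G P d k) (deviating_hashes \<epsilon> A d)"
proof -
  let ?M = "pair_pmf (hash_G P d k) Q"
  let ?bad = "{\<psi>. E1 \<epsilon> A \<psi> \<and> \<not> E2 \<epsilon> A \<psi>}"
  have bad_on_support: "?bad \<inter> set_pmf ?M \<subseteq> fst -` deviating_hashes \<epsilon> A d"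
  proof
    fix \<psi>
    assume \<psi>: "\<psi> \<in> ?bad \<inter> set_pmf ?M"
    then have "Max (fst \<psi> ` A) \<le> d"
      using A by (auto simp: set_pair_pmf set_pmf_hash_G_le)
    moreover obtain s where "1 \<le> s" "s \<le> Max (fst \<psi> ` A)" "b_param \<epsilon> * 2 ^ s \<le> 2 ^ 16 * card A"
        "level_deviates \<epsilon> A s (fst \<psi>)"
      using E1_not_E2_imp_level_deviates[OF A assms(3,4)] \<psi> by blast
    ultimately show "\<psi> \<in> fst -` deviating_hashes \<epsilon> A d"
      by (auto simp: deviating_hashes_def)
  qed
  have "measure_pmf.prob ?M ?bad = measure_pmf.prob ?M (?bad \<inter> set_pmf ?M)"
    by (rule measure_Int_set_pmf[symmetric])
  also have "\<dots> \<le> measure_pmf.prob ?M (fst -` deviating_hashes \<epsilon> A d)"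
    using bad_on_support by (rule measure_pmf.finite_measure_mono) simp
  also have "\<dots> = measure_pmf.prob (hash_G P d k) (deviating_hashes \<epsilon> A d)"
    by (simp only: measure_map_pmf[symmetric] map_fst_pair_pmf)
  finally show ?thesis .
qed

section \<open>Union bound over the levels\<close>

lemma prob_level_deviates_le:
  assumes P: "irreducible P" "degree P = d"
    and A: "finite A" "A \<noteq> {}" "A \<subseteq> {..<2 ^ d}"
    and "s \<le> d" "0 < \<epsilon>"
  shows "measure_pmf.prob (hash_G P d 2) {f. level_deviates \<epsilon> A s f} \<le> 9 * 2 ^ s / (\<epsilon>\<^sup>2 * card A)"
proof -
  let ?T = "gf_tuples d 2"
  let ?I = "\<lambda>a as. s \<le> tz d (gf_eval P d as a)"
  define p :: real where "p = 1 / 2 ^ s"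
  define \<delta> where "\<delta> = \<epsilon> / 3 * (card A * p)"
  let ?bad = "{as \<in> ?T. \<delta> \<le> \<bar>card {a \<in> A. ?I a as} - card A * p\<bar>}"
  have "0 < card A" "0 < card ?T"
    using A by (auto simp: card_gf_tuples card_gt_0_iff)
  then have "0 < \<delta>"
    using \<open>0 < \<epsilon>\<close> by (simp add: \<delta>_def p_def)
  have "card ?bad * \<delta>\<^sup>2 \<le> card A * p * card ?T"
  proof (rule card_deviation_pairwise_le[OF finite_gf_tuples A(1) _ _ \<open>0 < \<delta>\<close>])
    show "card {as \<in> ?T. ?I a as} = p * card ?T" if "a \<in> A" for a
      using card_tz_level_single[OF P _ \<open>s \<le> d\<close>] that A(3) by (auto simp: p_def)
    show "card {as \<in> ?T. ?I a as \<and> ?I b as} = p\<^sup>2 * card ?T" if "a \<in> A" "b \<in> A" "a \<noteq> b" for a b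
      using card_tz_level_pair[OF P _ _ that(3) \<open>s \<le> d\<close>] that A(3) by (auto simp: p_def)
  qed
  then have "card ?bad / card ?T \<le> card A * p / \<delta>\<^sup>2"
    using \<open>0 < \<delta>\<close> \<open>0 < card ?T\<close> by (simp add: field_simps)
  also have "\<dots> = 9 * 2 ^ s / (\<epsilon>\<^sup>2 * card A)"
    using \<open>0 < card A\<close> \<open>0 < \<epsilon>\<close> by (simp add: \<delta>_def p_def field_simps power2_eq_square)
  finally show ?thesis
    by (simp add: measure_hash_G level_deviates_def \<delta>_def p_def)
qed

lemma sum_power2_le_double:
  fixes S :: "nat set" and b M :: nat
  assumes "finite S" "\<And>s. s \<in> S \<Longrightarrow> b * 2 ^ s \<le> M"
  shows "b * (\<Sum>s\<in>S. 2 ^ s) \<le> 2 * M"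
proof (cases "S = {}")
  case False
  define K where "K = Max S"
  have "K \<in> S" "S \<subseteq> {..<Suc K}"
    using assms(1) False by (auto simp: K_def less_Suc_eq_le)
  have "(\<Sum>s\<in>S. 2 ^ s) \<le> (\<Sum>s<Suc K. 2 ^ s :: nat)"
    using \<open>S \<subseteq> {..<Suc K}\<close> by (intro sum_mono2) auto
  also have "\<dots> \<le> 2 * 2 ^ K"
    using mask_eq_sum_exp_nat[of "Suc K"] by (simp add: lessThan_def)
  finally have "b * (\<Sum>s\<in>S. 2 ^ s) \<le> 2 * (b * 2 ^ K)"
    by simp
  also have "\<dots> \<le> 2 * M"
    using assms(2)[OF \<open>K \<in> S\<close>] by simp
  finally show ?thesis .
qed simp

lemma prob_deviating_hashes_le:
  fixes \<epsilon> :: real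
  assumes P: "irreducible P" "degree P = d"
    and A: "finite A" "A \<noteq> {}" "A \<subseteq> {..<2 ^ d}" and "0 < \<epsilon>"
  shows "measure_pmf.prob (hash_G P d 2) (deviating_hashes \<epsilon> A d) \<le> 9 * 2 ^ 17 / (\<epsilon>\<^sup>2 * b_param \<epsilon>)"
proof -
  define S where "S = {s. 1 \<le> s \<and> s \<le> d \<and> b_param \<epsilon> * 2 ^ s \<le> 2 ^ 16 * card A}"
  have "finite S"
    by (rule finite_subset[of _ "{..d}"]) (auto simp: S_def)
  have "0 < card A" "0 < b_param \<epsilon>"
    using A by (auto simp: card_gt_0_iff b_param_def)
  have "b_param \<epsilon> * (\<Sum>s\<in>S. 2 ^ s) \<le> 2 * (2 ^ 16 * card A)"
    using \<open>finite S\<close> by (rule sum_power2_le_double) (simp add: S_def)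
  then have "real (b_param \<epsilon> * (\<Sum>s\<in>S. 2 ^ s)) \<le> real (2 * (2 ^ 16 * card A))"
    by (simp only: of_nat_le_iff)
  then have geom: "(\<Sum>s\<in>S. 2 ^ s :: real) \<le> 2 ^ 17 * card A / b_param \<epsilon>"
    using \<open>0 < b_param \<epsilon>\<close> by (simp add: le_divide_eq mult.commute)
  have "deviating_hashes \<epsilon> A d = (\<Union>s\<in>S. {f. level_deviates \<epsilon> A s f})"
    by (auto simp: deviating_hashes_def S_def)
  then have "measure_pmf.prob (hash_G P d 2) (deviating_hashes \<epsilon> A d)
      \<le> (\<Sum>s\<in>S. measure_pmf.prob (hash_G P d 2) {f. level_deviates \<epsilon> A s f})"
    using \<open>finite S\<close> by (simp add: measure_pmf.finite_measure_subadditive_finite)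
  also have "\<dots> \<le> (\<Sum>s\<in>S. 9 / (\<epsilon>\<^sup>2 * card A) * 2 ^ s)"
    using prob_level_deviates_le[OF P A _ \<open>0 < \<epsilon>\<close>] by (intro sum_mono) (simp add: S_def)
  also have "\<dots> = 9 / (\<epsilon>\<^sup>2 * card A) * (\<Sum>s\<in>S. 2 ^ s)"
    by (rule sum_distrib_left[symmetric])
  also have "\<dots> \<le> 9 / (\<epsilon>\<^sup>2 * card A) * (2 ^ 17 * card A / b_param \<epsilon>)"
    using geom by (rule mult_left_mono) simp
  also have "\<dots> = 9 * 2 ^ 17 / (\<epsilon>\<^sup>2 * b_param \<epsilon>)"
    using \<open>0 < card A\<close> by simp
  finally show ?thesis .
qed

lemma b_param_mult_sq_ge:
  fixes \<epsilon> :: real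
  assumes "0 < \<epsilon>"
  shows "9 * 2 ^ 23 \<le> real (b_param \<epsilon>) * \<epsilon>\<^sup>2"
proof -
  define v where "v = 9 * 2 ^ 23 / \<epsilon>\<^sup>2"
  have "0 < v"
    using assms by (simp add: v_def)
  have "log 2 v \<le> real (log_b \<epsilon>)"
    unfolding log_b_def v_def[symmetric] by linarith
  then have "v \<le> 2 powr real (log_b \<epsilon>)"
    using \<open>0 < v\<close> by (simp add: log_le_iff)
  then have "v \<le> b_param \<epsilon>"
    by (simp add: b_param_def powr_realpow)
  then show ?thesis
    using assms by (simp add: v_def divide_le_eq)
qed

lemma log_b_ge:
  fixes \<epsilon> :: real
  assumes "0 < \<epsilon>" "\<epsilon> < 1"
  shows "23 \<le> log_b \<epsilon>"
proof -
  have "\<epsilon>\<^sup>2 < 1"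
    using assms by (simp add: power_less_one_iff)
  then have "2 powr 23 \<le> 9 * 2 ^ 23 / \<epsilon>\<^sup>2"
    using assms by (simp add: le_divide_eq)
  then have "23 \<le> log 2 (9 * 2 ^ 23 / \<epsilon>\<^sup>2)"
    using assms by (simp add: le_log_iff)
  then show ?thesis
    unfolding log_b_def by linarith
qed

theorem lemma10:
  fixes n :: nat and \<epsilon> :: real and A :: "nat set"
    and d1 d2 d3 :: nat and P1 P2 P3 :: "bit poly"
  assumes "n \<ge> 1" and "0 < \<epsilon>" and "\<epsilon> < 1"
    and "A \<subseteq> {..<n}" and "A \<noteq> {}"
    and "irreducible P1" and "degree P1 = d1" and "2 ^ d1 \<ge> n"
    and "irreducible P2" and "degree P2 = d2" and "2 ^ d2 \<ge> n"
    and "d2 \<ge> 5 + 2 * log_b \<epsilon>"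
    and "irreducible P3" and "degree P3 = d3" and "2 ^ d3 \<ge> 2 ^ 5 * b_param \<epsilon> ^ 2"
    and "d3 \<ge> log_b \<epsilon>"
  shows "measure_pmf.prob
           (pair_pmf (hash_G P1 d1 2)
              (pair_pmf (hash_H P2 d2 2 (5 + 2 * log_b \<epsilon>))
                        (hash_H P3 d3 (k_param \<epsilon>) (log_b \<epsilon>))))
           {\<psi>. E1 \<epsilon> A \<psi> \<and> \<not> E2 \<epsilon> A \<psi>} \<le> 2 powi (-6)"
proof -
  have A: "finite A" "A \<subseteq> {..<2 ^ d1}"
    using assms(4,8) finite_subset by auto
  have "9 \<le> log_b \<epsilon>"
    using log_b_ge[OF assms(2,3)] by simp
  have "measure_pmf.prob (hash_G P1 d1 2) (deviating_hashes \<epsilon> A d1) \<le> 9 * 2 ^ 17 / (\<epsilon>\<^sup>2 * b_param \<epsilon>)"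
    by (rule prob_deviating_hashes_le[OF assms(6,7) A(1) assms(5) A(2) assms(2)])
  also have "\<dots> \<le> 2 powi (-6)"
    using b_param_mult_sq_ge[OF assms(2)] assms(2)
    by (simp add: power_int_minus divide_le_eq mult.commute)
  finally show ?thesis
    using prob_E1_not_E2_le[OF A(1) assms(5) less_imp_le[OF assms(2)] \<open>9 \<le> log_b \<epsilon>\<close>]
    by (rule order.trans[rotated])
qed

end
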